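(* Let $n\in\mathbb{Z}$ with $|n|\geq1$, $\alpha>0$, $R>0$, $Q_0>0$. Let $u$ be a minimizer of $\mathcal{I}$ over $\{u\in\mathcal{A}: Q(u)=Q_0\}$ with $u(r)>0$ for $r\in(0,R)$, and let $\kappa\in\mathbb{R}$ be the associated Lagrange multiplier, so that $(u,\kappa)$ solves $$(ru_r)_r-\frac{n^2}{r}u+\frac{2ru^3}{1+\alpha u^2}=2\kappa ru\ \text{ on }(0,R),\qquad u(0)=0,\quad u(R)=0.$$ Then: (i) $$\kappa\geq \alpha^{-1}-\frac{6}{R^2}\left(1+n^2(2\ln2-1)\right)-\frac{\pi R^2}{\alpha^2Q_0}\left[\ln\!\left(1+\frac{3\alpha Q_0}{\pi R^2}\right)-2+\sqrt{\frac{4\pi R^2}{3\alpha Q_0}}\,\tan^{-1}\!\left(\sqrt{\frac{3\alpha Q_0}{\pi R^2}}\right)\right].$$ (ii) If $|n|\geq Q_0/\pi$, then $\kappa<0$. (iii) If $\kappa>0$, then there exist constants $C_\kappa>0$ and $R_\kappa\in[0,R)$ depending only on $\kappa$ such that $u^2(r)\leq C_\kappa\exp(-\sqrt{2\kappa}\,r)$ for all $r\in[R_\kappa,R]$ (i.e., for $r$ sufficiently large).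
   Context: $\mathcal{A}$ is the class of functions $u$ absolutely continuous on $[0,R]$ with $u(0)=u(R)=0$ and $\mathcal{E}(u)<\infty$, where $\mathcal{E}(u)=\frac12\int_0^R\left\{ru_r^2+\frac1r u^2+r\ln(1+\alpha u^2)\right\}dr$. The action functional is $\mathcal{I}(u)=\frac12\int_0^R\left\{ru_r^2+\frac{n^2}{r}u^2-2\alpha^{-1}ru^2+2\alpha^{-2}r\ln(1+\alpha u^2)\right\}dr$, and the energy flux is $Q(u)=2\pi\int_0^R ru^2\,dr$. *)

theory Defs
  imports "HOL-Analysis.Analysis"
begin

definition abs_continuous_on :: "real \<Rightarrow> real \<Rightarrow> (real \<Rightarrow> real) \<Rightarrow> bool" where
  "abs_continuous_on a b u \<longleftrightarrow>
     (\<forall>\<epsilon>>0. \<exists>\<delta>>0. \<forall>(k::nat) (s::nat \<Rightarrow> real) (t::nat \<Rightarrow> real).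
        (\<forall>i<k. a \<le> s i \<and> s i \<le> t i \<and> t i \<le> b) \<and>
        (\<forall>i<k. \<forall>j<k. i \<noteq> j \<longrightarrow> t i \<le> s j \<or> t j \<le> s i) \<and>
        (\<Sum>i<k. t i - s i) < \<delta>
        \<longrightarrow> (\<Sum>i<k. \<bar>u (t i) - u (s i)\<bar>) < \<epsilon>)"

text \<open>The energy E(u); u_r is the (a.e. existing) derivative of u.\<close>
definition energyE :: "real \<Rightarrow> real \<Rightarrow> (real \<Rightarrow> real) \<Rightarrow> ennreal" where
  "energyE \<alpha> R u = (\<integral>\<^sup>+ r. indicator {0<..<R} r *
      ennreal (1/2 * (r * (deriv u r)\<^sup>2 + (1/r) * (u r)\<^sup>2 + r * ln (1 + \<alpha> * (u r)\<^sup>2))) \<partial>lebesgue)"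

definition admissible :: "real \<Rightarrow> real \<Rightarrow> (real \<Rightarrow> real) \<Rightarrow> bool" where
  "admissible \<alpha> R u \<longleftrightarrow> abs_continuous_on 0 R u \<and> u 0 = 0 \<and> u R = 0 \<and> energyE \<alpha> R u < \<infinity>"

definition actionI :: "int \<Rightarrow> real \<Rightarrow> real \<Rightarrow> (real \<Rightarrow> real) \<Rightarrow> real" where
  "actionI n \<alpha> R u = (LINT r:{0<..<R}|lebesgue.
      1/2 * (r * (deriv u r)\<^sup>2 + (real_of_int n)\<^sup>2 / r * (u r)\<^sup>2
             - 2 / \<alpha> * r * (u r)\<^sup>2 + 2 / \<alpha>\<^sup>2 * r * ln (1 + \<alpha> * (u r)\<^sup>2)))"

definition fluxQ :: "real \<Rightarrow> (real \<Rightarrow> real) \<Rightarrow> real" where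
  "fluxQ R u = 2 * pi * (LINT r:{0<..<R}|lebesgue. r * (u r)\<^sup>2)"

definition constrained_minimizer :: "int \<Rightarrow> real \<Rightarrow> real \<Rightarrow> real \<Rightarrow> (real \<Rightarrow> real) \<Rightarrow> bool" where
  "constrained_minimizer n \<alpha> R Q0 u \<longleftrightarrow>
     admissible \<alpha> R u \<and> fluxQ R u = Q0 \<and>
     (\<forall>v. admissible \<alpha> R v \<and> fluxQ R v = Q0 \<longrightarrow> actionI n \<alpha> R u \<le> actionI n \<alpha> R v)"

definition solves_EL :: "int \<Rightarrow> real \<Rightarrow> real \<Rightarrow> real \<Rightarrow> (real \<Rightarrow> real) \<Rightarrow> bool" where
  "solves_EL n \<alpha> R \<kappa> u \<longleftrightarrow>
     u 0 = 0 \<and> u R = 0 \<and>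
     (\<forall>r\<in>{0<..<R}. u differentiable (at r) \<and>
        ((\<lambda>s. s * deriv u s) has_real_derivative
           (2 * \<kappa> * r * u r + (real_of_int n)\<^sup>2 / r * u r
            - 2 * r * (u r)^3 / (1 + \<alpha> * (u r)\<^sup>2))) (at r))"

definition hyp32 :: "int \<Rightarrow> real \<Rightarrow> real \<Rightarrow> real \<Rightarrow> (real \<Rightarrow> real) \<Rightarrow> real \<Rightarrow> bool" where
  "hyp32 n \<alpha> R Q0 u \<kappa> \<longleftrightarrow>
     constrained_minimizer n \<alpha> R Q0 u \<and> (\<forall>r\<in>{0<..<R}. u r > 0) \<and> solves_EL n \<alpha> R \<kappa> u"

end

theory Submission
  imports Defs
begin

text \<open>Testing the Euler--Lagrange equation with \<open>u\<close> (the boundary terms \<open>r u' u\<close> vanish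
  because the energy is finite) gives
  \<open>\<integral> r u'\<^sup>2 + n\<^sup>2 \<integral> u\<^sup>2/r + 2\<kappa> \<integral> r u\<^sup>2 = 2 \<integral> r u\<^sup>4/(1+\<alpha>u\<^sup>2)\<close>.
  The pointwise bound \<open>u\<^sup>4/(1+\<alpha>u\<^sup>2) \<ge> u\<^sup>2/\<alpha> - ln(1+\<alpha>u\<^sup>2)/\<alpha>\<^sup>2\<close> turns this into
  \<open>\<kappa> Q\<^sub>0/(2\<pi>) \<ge> -I(u) \<ge> -I(v)\<close> for every competitor \<open>v\<close>; a tent-shaped \<open>v\<close> with flux \<open>Q\<^sub>0\<close>
  gives (i). Writing \<open>u(r)\<^sup>2 = -2\<integral>\<^sub>r\<^sup>R u u'\<close> and using AM--GM gives
  \<open>u\<^sup>2 \<le> |n| \<integral> u\<^sup>2/r + \<integral> r u'\<^sup>2/|n|\<close>; this yields (ii) when \<open>Q\<^sub>0/\<pi> \<le> |n|\<close>, and also the uniform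
  bound \<open>u\<^sup>2 \<le> 2 I(v) + Q\<^sub>0/(\<pi>\<alpha>)\<close>, which on the bounded interval \<open>[0,R]\<close> gives (iii).\<close>

lemma abs_continuous_on_imp_continuous_on:
  assumes "abs_continuous_on a b u"
  shows "continuous_on {a..b} u"
  unfolding continuous_on_iff
proof (intro ballI allI impI)
  fix x e :: real assume x: "x \<in> {a..b}" and e: "0 < e"
  obtain d where d: "d > 0" and H: "\<And>(k::nat) (s::nat \<Rightarrow> real) (t::nat \<Rightarrow> real).
        (\<forall>i<k. a \<le> s i \<and> s i \<le> t i \<and> t i \<le> b) \<and>
        (\<forall>i<k. \<forall>j<k. i \<noteq> j \<longrightarrow> t i \<le> s j \<or> t j \<le> s i) \<and>
        (\<Sum>i<k. t i - s i) < d
        \<Longrightarrow> (\<Sum>i<k. \<bar>u (t i) - u (s i)\<bar>) < e"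
    using assms e unfolding abs_continuous_on_def by blast
  show "\<exists>d>0. \<forall>x'\<in>{a..b}. dist x' x < d \<longrightarrow> dist (u x') (u x) < e"
  proof (intro exI[of _ d] conjI ballI impI d)
    fix y assume y: "y \<in> {a..b}" and dy: "dist y x < d"
    have "(\<Sum>i<(1::nat). \<bar>u ((\<lambda>_. max x y) i) - u ((\<lambda>_. min x y) i)\<bar>) < e"
      by (rule H) (use x y dy in \<open>auto simp: dist_real_def\<close>)
    then show "dist (u y) (u x) < e"
      by (auto simp: dist_real_def max_def min_def split: if_splits)
  qed
qed

lemma set_integral_nonneg_real:
  fixes f :: "'a \<Rightarrow> real"
  assumes "\<And>x. x \<in> A \<Longrightarrow> 0 \<le> f x"
  shows "0 \<le> (LINT x:A|M. f x)"
  unfolding set_lebesgue_integral_def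
  by (rule Bochner_Integration.integral_nonneg) (simp add: assms indicator_def)

lemma set_integrable_bound_continuous:
  fixes f g :: "real \<Rightarrow> real"
  assumes "set_integrable lborel A g" "open A" "continuous_on A f"
    "\<And>x. x \<in> A \<Longrightarrow> \<bar>f x\<bar> \<le> c * g x"
  shows "set_integrable lborel A f"
proof (rule set_integrable_bound[where f="\<lambda>x. c * g x"])
  show "set_integrable lborel A (\<lambda>x. c * g x)" using assms(1) by simp
  show "set_borel_measurable lborel A f"
    using set_measurable_continuous_on[OF _ assms(3)] assms(2)
    by (simp add: set_borel_measurable_def)
  show "AE x in lborel. x \<in> A \<longrightarrow> norm (f x) \<le> norm (c * g x)"
    using assms(4) by (auto intro!: AE_I2 order_trans[OF _ abs_ge_self])
qed

lemma set_integral_mono_set_nonneg: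
  fixes f :: "real \<Rightarrow> real"
  assumes "set_integrable lborel A f" "B \<subseteq> A" "B \<in> sets lborel" "\<And>x. x \<in> A \<Longrightarrow> 0 \<le> f x"
  shows "(LINT x:B|lborel. f x) \<le> (LINT x:A|lborel. f x)"
proof -
  have "set_integrable lborel B f" by (rule set_integrable_subset[OF assms(1,3,2)])
  then show ?thesis using assms(1) unfolding set_lebesgue_integral_def set_integrable_def
    by (rule integral_mono) (use assms(2,4) in \<open>auto simp: indicator_def\<close>)
qed

lemma set_integral_pos_Ioo:
  fixes h :: "real \<Rightarrow> real"
  assumes "set_integrable lborel {a<..<b} h" "a < b" "\<And>x. x \<in> {a<..<b} \<Longrightarrow> 0 < h x"
  shows "0 < (LINT x:{a<..<b}|lborel. h x)"
proof -
  have ge: "0 \<le> (LINT x:{a<..<b}|lborel. h x)"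
    by (rule set_integral_nonneg_real) (use assms(3) in \<open>auto intro: less_imp_le\<close>)
  have "(LINT x:{a<..<b}|lborel. h x) \<noteq> 0"
  proof
    assume "(LINT x:{a<..<b}|lborel. h x) = 0"
    then have "AE x in lborel. indicator {a<..<b} x *\<^sub>R h x = 0"
      using assms(1,3) unfolding set_lebesgue_integral_def set_integrable_def
      by (subst integral_nonneg_eq_0_iff_AE[symmetric])
         (auto simp: indicator_def intro!: AE_I2 less_imp_le)
    then have "AE x in lborel. x \<notin> {a<..<b}"
    proof eventually_elim
      case (elim x)
      show ?case
      proof
        assume "x \<in> {a<..<b}"
        with elim assms(3)[of x] show False by simp
      qed
    qed
    then have "{a<..<b} \<in> null_sets lborel" by (subst AE_iff_null_sets) auto
    then show False using assms(2) by auto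
  qed
  then show ?thesis using ge by linarith
qed

lemma set_lebesgue_integral_completion:
  fixes f :: "real \<Rightarrow> real"
  assumes "set_integrable lborel A f"
  shows "(LINT x:A|lebesgue. f x) = (LINT x:A|lborel. f x)"
  unfolding set_lebesgue_integral_def
  by (rule integral_completion) (use assms in \<open>auto simp: set_integrable_def\<close>)

lemma has_integral_real_derivative:
  fixes G g :: "real \<Rightarrow> real"
  assumes "a \<le> b" "\<And>x. x \<in> {a..b} \<Longrightarrow> (G has_real_derivative g x) (at x)"
  shows "(g has_integral G b - G a) {a..b}"
  by (rule fundamental_theorem_of_calculus[OF assms(1)])
     (use assms(2) has_real_derivative_iff_has_vector_derivative has_vector_derivative_at_within in blast)

text \<open>\<open>\<integral>\<^sub>\<epsilon>\<^sup>\<delta> c/x = c (ln \<delta> - ln \<epsilon>)\<close> exceeds any given bound once \<open>\<epsilon>\<close> is small enough.\<close>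
lemma no_integrable_bound_above_inverse:
  fixes f :: "real \<Rightarrow> real"
  assumes f: "set_integrable lborel {0<..<b} f" and b: "0 < b" and c: "0 < c"
    and bound: "\<And>x. x \<in> {0<..<b} \<Longrightarrow> c / x \<le> f x"
  shows False
proof -
  define H where "H = (LINT x:{0<..<b}|lborel. f x)"
  define \<delta> where "\<delta> = b / 2"
  define \<epsilon> where "\<epsilon> = \<delta> * exp (- (H / c) - 1)"
  have f_nonneg: "0 \<le> f x" if "x \<in> {0<..<b}" for x
  proof -
    have "0 < c / x" using that c by simp
    then show ?thesis using bound[OF that] by linarith
  qed
  have "0 \<le> H" unfolding H_def by (rule set_integral_nonneg_real) (rule f_nonneg)
  then have "0 \<le> H / c" using c by simp
  then have "exp (- (H / c) - 1) < 1" by simp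
  then have e: "0 < \<epsilon>" "\<epsilon> < \<delta>" "\<delta> < b" unfolding \<epsilon>_def \<delta>_def using b by auto
  have ln_eps: "ln \<epsilon> = ln \<delta> - H / c - 1" unfolding \<epsilon>_def using e by (simp add: ln_mult)
  have "((\<lambda>x. c / x) has_integral c * ln \<delta> - c * ln \<epsilon>) {\<epsilon>..\<delta>}"
  proof (rule has_integral_real_derivative)
    fix x assume "x \<in> {\<epsilon>..\<delta>}"
    then have "0 < x" using e by auto
    from DERIV_cmult[OF DERIV_ln_divide[OF this], of c]
    show "((\<lambda>x. c * ln x) has_real_derivative c / x) (at x)" by simp
  qed (use e in simp)
  moreover have int_inv: "set_integrable lborel {\<epsilon>..\<delta>} (\<lambda>x. c / x)"
    by (rule borel_integrable_atLeastAtMost') (use e in \<open>auto intro!: continuous_on_divide continuous_on_const continuous_on_id\<close>)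
  ultimately have "(LINT x:{\<epsilon>..\<delta>}|lborel. c / x) = c * ln \<delta> - c * ln \<epsilon>"
    by (simp add: set_borel_integral_eq_integral(2) integral_unique)
  also have "\<dots> = H + c"
    using ln_eps c by (simp add: field_simps)
  finally have int_eq: "(LINT x:{\<epsilon>..\<delta>}|lborel. c / x) = H + c" .
  have sub: "{\<epsilon>..\<delta>} \<subseteq> {0<..<b}" using e by auto
  have "(LINT x:{\<epsilon>..\<delta>}|lborel. c / x) \<le> (LINT x:{\<epsilon>..\<delta>}|lborel. f x)"
    by (rule set_integral_mono[OF int_inv set_integrable_subset[OF f _ sub]])
       (use sub in \<open>auto intro: bound\<close>)
  also have "\<dots> \<le> H"
    unfolding H_def by (rule set_integral_mono_set_nonneg[OF f sub _ f_nonneg]) simp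
  finally show False using int_eq c by simp
qed

lemma ln_add_one_ge_div:
  fixes x :: real assumes "0 \<le> x" shows "x / (1 + x) \<le> ln (1 + x)"
proof -
  have "ln (1 / (1 + x)) \<le> 1 / (1 + x) - 1" using assms by (intro ln_le_minus_one) simp
  moreover have "ln (1 / (1 + x)) = - ln (1 + x)" using assms by (simp add: ln_div)
  moreover have "1 / (1 + x) - 1 = - (x / (1 + x))" using assms by (simp add: field_simps)
  ultimately show ?thesis by linarith
qed

lemma sq_div_one_plus_ge_linear_minus_ln:
  fixes a y :: real assumes a: "0 < a" and y: "0 \<le> y"
  shows "y / a - ln (1 + a * y) / a\<^sup>2 \<le> y\<^sup>2 / (1 + a * y)"
proof -
  have pos: "0 < 1 + a * y" using a y by (simp add: add_pos_nonneg)
  have "y / (1 + a * y) \<le> ln (1 + a * y) / a"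
    using ln_add_one_ge_div[of "a * y"] a y by (simp add: field_simps)
  then have "y / (1 + a * y) / a \<le> ln (1 + a * y) / a / a"
    using a by (intro divide_right_mono) auto
  then have le: "y / (1 + a * y) / a \<le> ln (1 + a * y) / a\<^sup>2"
    by (simp add: power2_eq_square)
  moreover have "y - y / (1 + a * y) = a * y\<^sup>2 / (1 + a * y)"
    using pos by (simp add: field_simps power2_eq_square)
  then have "(y - y / (1 + a * y)) / a = y\<^sup>2 / (1 + a * y)"
    using a by simp
  then have "y\<^sup>2 / (1 + a * y) = y / a - y / (1 + a * y) / a"
    by (simp add: diff_divide_distrib)
  with le show ?thesis by linarith
qed

section \<open>Positive solutions of the Euler--Lagrange equation\<close>

locale radial_solution =
  fixes n :: int and \<alpha> R \<kappa> :: real and u :: "real \<Rightarrow> real"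
  assumes n_ge_1: "\<bar>n\<bar> \<ge> 1" and alpha_pos: "\<alpha> > 0" and R_pos: "R > 0"
    and admissible: "admissible \<alpha> R u" and u_pos: "\<forall>r\<in>{0<..<R}. u r > 0"
    and solves_EL: "solves_EL n \<alpha> R \<kappa> u"
begin

abbreviation "u' \<equiv> deriv u"

definition "el_rhs r = 2 * \<kappa> * r * u r + (real_of_int n)\<^sup>2 / r * u r
            - 2 * r * (u r)^3 / (1 + \<alpha> * (u r)\<^sup>2)"

lemma u_0: "u 0 = 0" and u_R: "u R = 0"
  using solves_EL unfolding solves_EL_def by auto

lemma continuous_on_u: "continuous_on {0..R} u"
  using admissible abs_continuous_on_imp_continuous_on unfolding admissible_def by blast

lemma u_has_derivative: "r \<in> {0<..<R} \<Longrightarrow> (u has_real_derivative u' r) (at r)"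
  using solves_EL DERIV_deriv_iff_real_differentiable unfolding solves_EL_def by blast

lemma ru'_has_derivative: "r \<in> {0<..<R} \<Longrightarrow> ((\<lambda>s. s * u' s) has_real_derivative el_rhs r) (at r)"
  using solves_EL unfolding solves_EL_def el_rhs_def by blast

lemma continuous_on_u_open: "continuous_on {0<..<R} u"
  using u_has_derivative DERIV_isCont by (blast intro: continuous_at_imp_continuous_on)

lemma continuous_on_u': "continuous_on {0<..<R} u'"
proof -
  have "continuous_on {0<..<R} (\<lambda>s. s * u' s / s)"
  proof (intro continuous_on_divide continuous_on_id)
    show "continuous_on {0<..<R} (\<lambda>s. s * u' s)"
      using ru'_has_derivative DERIV_isCont by (blast intro: continuous_at_imp_continuous_on)
  qed auto
  then show ?thesis by (rule continuous_on_eq) simp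
qed

lemma u_tendsto_R: "(u \<longlongrightarrow> 0) (at_left R)"
proof -
  have "(u \<longlongrightarrow> u R) (at R within {0..R})"
    using continuous_on_u R_pos by (simp add: continuous_on_def)
  then show ?thesis using u_R R_pos by (simp add: at_within_Icc_at_left)
qed

lemma denominator_pos: "0 < 1 + \<alpha> * (u r)\<^sup>2"
  using alpha_pos by (simp add: add_pos_nonneg)

lemma el_rhs_bounded_near_R: obtains B where "\<And>r. r \<in> {R/2..<R} \<Longrightarrow> \<bar>el_rhs r\<bar> \<le> B"
proof -
  have "continuous_on {R/2..R} u" by (rule continuous_on_subset[OF continuous_on_u]) auto
  then have "continuous_on {R/2..R} el_rhs"
    unfolding el_rhs_def using R_pos denominator_pos
    by (auto intro!: continuous_intros simp: less_imp_neq[symmetric])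
  then have "bounded (el_rhs ` {R/2..R})" by (intro compact_imp_bounded compact_continuous_image) auto
  then obtain B where B: "\<forall>x\<in>el_rhs ` {R/2..R}. \<bar>x\<bar> \<le> B" unfolding bounded_iff by auto
  show ?thesis by (rule that[of B]) (use B in auto)
qed

lemma ru'_bounded_near_R: obtains B where "\<And>r. r \<in> {R/2..<R} \<Longrightarrow> \<bar>r * u' r\<bar> \<le> B"
proof -
  obtain B where B: "\<And>r. r \<in> {R/2..<R} \<Longrightarrow> \<bar>el_rhs r\<bar> \<le> B" using el_rhs_bounded_near_R by blast
  have "\<bar>r * u' r\<bar> \<le> \<bar>R/2 * u' (R/2)\<bar> + B * R" if r: "r \<in> {R/2..<R}" for r
  proof -
    have "norm (r * u' r - R/2 * u' (R/2)) \<le> B * norm (r - R/2)"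
    proof (rule field_differentiable_bound[where S="{R/2..<R}" and f'=el_rhs])
      show "((\<lambda>s. s * u' s) has_field_derivative el_rhs z) (at z within {R/2..<R})"
        if "z \<in> {R/2..<R}" for z
        using ru'_has_derivative[of z] that R_pos by (auto intro: has_field_derivative_at_within)
    qed (use B r R_pos in auto)
    moreover have "B * norm (r - R/2) \<le> B * R"
      using r R_pos B[of "R/2"] by (intro mult_left_mono) auto
    ultimately show ?thesis by auto
  qed
  then show ?thesis by (rule that)
qed

definition "energy_density r = 1/2 * (r * (u' r)\<^sup>2 + (1/r) * (u r)\<^sup>2 + r * ln (1 + \<alpha> * (u r)\<^sup>2))"
definition "grad_density r = r * (u' r)\<^sup>2"
definition "angular_density r = (u r)\<^sup>2 / r"
definition "mass_density r = r * (u r)\<^sup>2"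
definition "log_density r = r * ln (1 + \<alpha> * (u r)\<^sup>2)"
definition "saturation_density r = r * (u r)^4 / (1 + \<alpha> * (u r)\<^sup>2)"
definition "u_u' r = u r * u' r"

lemma continuous_on_densities:
  "continuous_on {0<..<R} energy_density" "continuous_on {0<..<R} grad_density"
  "continuous_on {0<..<R} angular_density" "continuous_on {0<..<R} mass_density"
  "continuous_on {0<..<R} log_density" "continuous_on {0<..<R} saturation_density"
  "continuous_on {0<..<R} u_u'"
  unfolding energy_density_def grad_density_def angular_density_def mass_density_def
    log_density_def saturation_density_def u_u'_def
  using continuous_on_u_open continuous_on_u' denominator_pos
  by (auto intro!: continuous_intros simp: less_imp_neq[symmetric])

lemma energy_density_integrable: "set_integrable lborel {0<..<R} energy_density"
proof -
  have finite: "energyE \<alpha> R u < \<infinity>" using admissible unfolding admissible_def by blast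
  have nonneg: "0 \<le> energy_density r" if "r \<in> {0<..<R}" for r
    unfolding energy_density_def using that alpha_pos by (auto intro!: ln_ge_zero)
  have meas: "(\<lambda>x. indicator {0<..<R} x *\<^sub>R energy_density x) \<in> borel_measurable lborel"
    using borel_measurable_continuous_on_indicator[OF _ continuous_on_densities(1)] by simp
  have "(\<integral>\<^sup>+x. ennreal (indicator {0<..<R} x *\<^sub>R energy_density x) \<partial>lborel) = energyE \<alpha> R u"
    unfolding energyE_def nn_integral_completion energy_density_def
    by (rule nn_integral_cong) (simp add: indicator_def)
  then show ?thesis unfolding set_integrable_def
    using finite nonneg by (intro integrableI_nonneg[OF meas]) (auto simp: indicator_def intro!: AE_I2)
qed

lemma density_bounds:
  assumes r: "r \<in> {0<..<R}"
  shows "\<bar>grad_density r\<bar> \<le> 2 * energy_density r" "\<bar>angular_density r\<bar> \<le> 2 * energy_density r"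
    "\<bar>log_density r\<bar> \<le> 2 * energy_density r" "\<bar>mass_density r\<bar> \<le> 2 * R\<^sup>2 * energy_density r"
    "\<bar>saturation_density r\<bar> \<le> 2 * R\<^sup>2 / \<alpha> * energy_density r"
    "\<bar>u_u' r\<bar> \<le> energy_density r"
    and density_nonneg: "0 \<le> grad_density r" "0 \<le> angular_density r" "0 \<le> log_density r"
    "0 \<le> mass_density r" "0 \<le> saturation_density r"
proof -
  have r0: "0 < r" "r < R" using r by auto
  have nonneg: "0 \<le> grad_density r" "0 \<le> angular_density r" "0 \<le> log_density r"
    "0 \<le> mass_density r" "0 \<le> saturation_density r"
    unfolding grad_density_def angular_density_def log_density_def mass_density_def
      saturation_density_def
    using r0 alpha_pos denominator_pos[of r] by (auto intro!: ln_ge_zero)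
  then show "0 \<le> grad_density r" "0 \<le> angular_density r" "0 \<le> log_density r"
    "0 \<le> mass_density r" "0 \<le> saturation_density r" by auto
  have split: "2 * energy_density r = grad_density r + angular_density r + log_density r"
    unfolding energy_density_def grad_density_def angular_density_def log_density_def by simp
  then show grad: "\<bar>grad_density r\<bar> \<le> 2 * energy_density r"
    and angular: "\<bar>angular_density r\<bar> \<le> 2 * energy_density r"
    and "\<bar>log_density r\<bar> \<le> 2 * energy_density r" using nonneg by auto
  have "mass_density r = r\<^sup>2 * angular_density r"
    unfolding mass_density_def angular_density_def using r0 by (simp add: power2_eq_square)
  also have "\<dots> \<le> R\<^sup>2 * (2 * energy_density r)"
    using r0 nonneg angular by (intro mult_mono power_mono) auto
  finally show mass: "\<bar>mass_density r\<bar> \<le> 2 * R\<^sup>2 * energy_density r" using nonneg by simp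
  have "\<alpha> * (u r)^4 \<le> (u r)\<^sup>2 * (1 + \<alpha> * (u r)\<^sup>2)"
    by (simp add: algebra_simps power2_eq_square power4_eq_xxxx)
  then have "(u r)^4 / (1 + \<alpha> * (u r)\<^sup>2) \<le> (u r)\<^sup>2 / \<alpha>"
    using alpha_pos denominator_pos[of r] by (simp add: divide_simps mult.commute)
  then have "saturation_density r \<le> mass_density r / \<alpha>"
    unfolding saturation_density_def mass_density_def using r0
    by (metis mult_left_mono less_imp_le times_divide_eq_right)
  also have "\<dots> \<le> 2 * R\<^sup>2 * energy_density r / \<alpha>"
    using mass alpha_pos by (simp add: divide_right_mono)
  finally show "\<bar>saturation_density r\<bar> \<le> 2 * R\<^sup>2 / \<alpha> * energy_density r" using nonneg by simp
  have "2 * r * (\<bar>u r\<bar> * \<bar>u' r\<bar>) \<le> (u r)\<^sup>2 + r\<^sup>2 * (u' r)\<^sup>2"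
    using zero_le_power2[of "\<bar>u r\<bar> - r * \<bar>u' r\<bar>"] by (simp add: power2_eq_square algebra_simps)
  then have "2 * \<bar>u_u' r\<bar> \<le> angular_density r + grad_density r"
    unfolding grad_density_def angular_density_def u_u'_def using r0
    by (simp add: field_simps power2_eq_square abs_mult)
  then show "\<bar>u_u' r\<bar> \<le> energy_density r" using split nonneg by simp
qed

lemma densities_integrable:
  "set_integrable lborel {0<..<R} grad_density" "set_integrable lborel {0<..<R} angular_density"
  "set_integrable lborel {0<..<R} mass_density" "set_integrable lborel {0<..<R} log_density"
  "set_integrable lborel {0<..<R} saturation_density" "set_integrable lborel {0<..<R} u_u'"
  using set_integrable_bound_continuous[OF energy_density_integrable open_greaterThanLessThan]
    continuous_on_densities density_bounds
  by (metis mult_1)+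

definition "ru'u r = r * u' r * u r"
definition "ru'u_deriv r = 2 * \<kappa> * mass_density r + (real_of_int n)\<^sup>2 * angular_density r
   - 2 * saturation_density r + grad_density r"

lemma ru'u_has_derivative:
  assumes r: "r \<in> {0<..<R}" shows "(ru'u has_vector_derivative ru'u_deriv r) (at r)"
proof -
  have "((\<lambda>s. s * u' s * u s) has_real_derivative el_rhs r * u r + u' r * (r * u' r)) (at r)"
    using DERIV_mult[OF ru'_has_derivative[OF r] u_has_derivative[OF r]] by simp
  moreover have "el_rhs r * u r + u' r * (r * u' r) = ru'u_deriv r"
    unfolding el_rhs_def ru'u_deriv_def mass_density_def angular_density_def
      saturation_density_def grad_density_def
    using denominator_pos[of r] r
    by (simp add: field_simps power2_eq_square power3_eq_cube power4_eq_xxxx)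
  ultimately show ?thesis
    unfolding ru'u_def has_real_derivative_iff_has_vector_derivative[symmetric] by simp
qed

lemma continuous_on_ru'u_deriv: "continuous_on {0<..<R} ru'u_deriv"
  unfolding ru'u_deriv_def using continuous_on_densities by (auto intro!: continuous_intros)

lemma ru'u_deriv_integrable: "set_integrable lborel {0<..<R} ru'u_deriv"
  unfolding ru'u_deriv_def using densities_integrable by auto

lemma ru'u_tendsto_R: "(ru'u \<longlongrightarrow> 0) (at_left R)"
proof -
  obtain B where B: "\<And>r. r \<in> {R/2..<R} \<Longrightarrow> \<bar>r * u' r\<bar> \<le> B"
    using ru'_bounded_near_R by blast
  have "eventually (\<lambda>r. r \<in> {R/2<..<R}) (at_left R)"
    using R_pos by (intro eventually_at_left_real) simp
  then have "eventually (\<lambda>r. norm (ru'u r) \<le> norm (u r) * B) (at_left R)"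
  proof eventually_elim
    case (elim r)
    then have "\<bar>u r\<bar> * \<bar>r * u' r\<bar> \<le> \<bar>u r\<bar> * B" using B by (intro mult_left_mono) auto
    then show ?case by (simp add: ru'u_def abs_mult mult.commute mult.left_commute)
  qed
  then show ?thesis by (rule tendsto_0_le[OF u_tendsto_R])
qed

lemma ru'u_diff:
  assumes "0 < a" "a \<le> b" "b < R"
  shows "ru'u b - ru'u a = (LINT x:{a..b}|lborel. ru'u_deriv x)"
proof -
  have "(LBINT x=a..b. ru'u_deriv x) = ru'u b - ru'u a"
  proof (rule interval_integral_FTC_finite)
    show "continuous_on {min a b..max a b} ru'u_deriv"
      using assms by (intro continuous_on_subset[OF continuous_on_ru'u_deriv]) auto
    show "(ru'u has_vector_derivative ru'u_deriv x) (at x within {min a b..max a b})"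
      if "min a b \<le> x" "x \<le> max a b" for x
      by (rule has_vector_derivative_at_within, rule ru'u_has_derivative) (use that assms in auto)
  qed
  then show ?thesis using assms by (simp add: interval_integral_Icc)
qed

lemma ru'u_tendsto_0_ex: obtains L where "(ru'u \<longlongrightarrow> L) (at_right 0)"
proof -
  define h where "h = R / 2"
  have h: "0 < h" "h < R" unfolding h_def using R_pos by auto
  have integrable: "set_integrable lborel {0<..h} ru'u_deriv"
    by (rule set_integrable_subset[OF ru'u_deriv_integrable]) (use h in auto)
  have "((\<lambda>a. LINT x:{a..h}|lborel. ru'u_deriv x) \<longlongrightarrow> (LINT x:{0<..h}|lborel. ru'u_deriv x))
      (at_right 0)"
    by (rule tendsto_set_lebesgue_integral_at_right[OF h(1) _ integrable]) simp
  then have "((\<lambda>a. ru'u h - (LINT x:{a..h}|lborel. ru'u_deriv x))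
      \<longlongrightarrow> ru'u h - (LINT x:{0<..h}|lborel. ru'u_deriv x)) (at_right 0)"
    by (intro tendsto_intros)
  moreover have "eventually (\<lambda>a. ru'u h - (LINT x:{a..h}|lborel. ru'u_deriv x) = ru'u a) (at_right 0)"
    using eventually_at_right_real[OF h(1)]
  proof eventually_elim
    case (elim a)
    then have "ru'u h - ru'u a = (LINT x:{a..h}|lborel. ru'u_deriv x)"
      using h by (intro ru'u_diff) auto
    then show ?case by simp
  qed
  ultimately show ?thesis by (rule that[OF Lim_transform_eventually])
qed

text \<open>The limit exists, and \<open>|ru'u r| \<le> r \<cdot> energy_density r\<close> with an integrable energy
  density rules out a nonzero one.\<close>
lemma ru'u_tendsto_0: "(ru'u \<longlongrightarrow> 0) (at_right 0)"
proof -
  obtain L where L: "(ru'u \<longlongrightarrow> L) (at_right 0)" by (rule ru'u_tendsto_0_ex)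
  have "L = 0"
  proof (rule ccontr)
    assume "L \<noteq> 0"
    then have c: "0 < \<bar>L\<bar> / 2" "\<bar>L\<bar> / 2 < \<bar>L\<bar>" by auto
    have "eventually (\<lambda>x. \<bar>L\<bar> / 2 < \<bar>ru'u x\<bar>) (at_right 0)"
      using order_tendstoD(1)[OF tendsto_rabs[OF L] c(2)] .
    then obtain b where b: "b > 0" "\<And>y. 0 < y \<Longrightarrow> y < b \<Longrightarrow> \<bar>L\<bar> / 2 < \<bar>ru'u y\<bar>"
      unfolding eventually_at_right_field by auto
    show False
    proof (rule no_integrable_bound_above_inverse[OF _ _ c(1)])
      show "set_integrable lborel {0<..<min b R} energy_density"
        by (rule set_integrable_subset[OF energy_density_integrable]) auto
      show "0 < min b R" using b R_pos by simp
      fix x assume x: "x \<in> {0<..<min b R}"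
      then have xR: "x \<in> {0<..<R}" by auto
      have "\<bar>L\<bar> / 2 < \<bar>ru'u x\<bar>" using b x by auto
      also have "\<bar>ru'u x\<bar> = x * \<bar>u_u' x\<bar>" unfolding ru'u_def u_u'_def using x by (simp add: abs_mult)
      also have "\<dots> \<le> x * energy_density x" using density_bounds(6)[OF xR] x by (simp add: mult_left_mono)
      finally show "\<bar>L\<bar> / 2 / x \<le> energy_density x" using x by (simp add: field_simps)
    qed
  qed
  then show ?thesis using L by simp
qed

definition "grad_term = (LINT x:{0<..<R}|lborel. grad_density x)"
definition "angular_term = (LINT x:{0<..<R}|lborel. angular_density x)"
definition "mass = (LINT x:{0<..<R}|lborel. mass_density x)"
definition "log_term = (LINT x:{0<..<R}|lborel. log_density x)"
definition "saturation_term = (LINT x:{0<..<R}|lborel. saturation_density x)"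

lemma terms_nonneg:
  "0 \<le> grad_term" "0 \<le> angular_term" "0 \<le> mass" "0 \<le> log_term" "0 \<le> saturation_term"
  unfolding grad_term_def angular_term_def mass_def log_term_def saturation_term_def
  by (auto intro!: set_integral_nonneg_real density_nonneg)

lemma energy_identity:
  "grad_term + (real_of_int n)\<^sup>2 * angular_term + 2 * \<kappa> * mass - 2 * saturation_term = 0"
proof -
  have "(LBINT x=ereal 0..ereal R. ru'u_deriv x) = 0 - 0"
  proof (rule interval_integral_FTC_integrable[where F=ru'u])
    show "isCont ru'u_deriv x" if "ereal 0 < ereal x" "ereal x < ereal R" for x
      by (rule continuous_on_interior[OF continuous_on_ru'u_deriv]) (use that in simp)
    show "((ru'u \<circ> real_of_ereal) \<longlongrightarrow> 0) (at_right (ereal 0))"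
      unfolding ereal_tendsto_simps1 by (rule ru'u_tendsto_0)
    show "((ru'u \<circ> real_of_ereal) \<longlongrightarrow> 0) (at_left (ereal R))"
      unfolding ereal_tendsto_simps1 by (rule ru'u_tendsto_R)
  qed (use R_pos ru'u_has_derivative ru'u_deriv_integrable in auto)
  then have "(LINT x:{0<..<R}|lborel. ru'u_deriv x) = 0"
    using R_pos by (simp add: interval_lebesgue_integral_le_eq)
  then show ?thesis
    unfolding ru'u_deriv_def grad_term_def angular_term_def mass_def saturation_term_def
    using densities_integrable by simp
qed

lemma u_sq_eq_integral:
  assumes r0: "r0 \<in> {0<..<R}"
  shows "(u r0)\<^sup>2 = - 2 * (LINT s:{r0<..<R}|lborel. u_u' s)"
proof -
  have sub: "{r0<..<R} \<subseteq> {0<..<R}" using r0 by auto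
  have "(LBINT s=ereal r0..ereal R. 2 * u_u' s) = 0 - (u r0)\<^sup>2"
  proof (rule interval_integral_FTC_integrable[where F="\<lambda>s. (u s)\<^sup>2"])
    show "((\<lambda>s. (u s)\<^sup>2) has_vector_derivative 2 * u_u' x) (at x)"
      if "ereal r0 < ereal x" "ereal x < ereal R" for x
    proof -
      have x: "x \<in> {0<..<R}" using that r0 by auto
      show ?thesis
        using DERIV_power[OF u_has_derivative[OF x], of 2]
        unfolding u_u'_def has_real_derivative_iff_has_vector_derivative
        by (simp add: mult.commute mult.left_commute)
    qed
    show "isCont (\<lambda>s. 2 * u_u' s) x" if "ereal r0 < ereal x" "ereal x < ereal R" for x
    proof -
      have "continuous_on {0<..<R} (\<lambda>s. 2 * u_u' s)"
        using continuous_on_densities(7) by (intro continuous_intros)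
      then show ?thesis by (rule continuous_on_interior) (use that r0 in simp)
    qed
    show "set_integrable lborel (einterval (ereal r0) (ereal R)) (\<lambda>s. 2 * u_u' s)"
      using set_integrable_subset[OF densities_integrable(6) _ sub] by simp
    have "(u \<longlongrightarrow> u r0) (at_right r0)"
      using u_has_derivative[OF r0] DERIV_isCont isCont_def filterlim_at_split by blast
    then show "(((\<lambda>s. (u s)\<^sup>2) \<circ> real_of_ereal) \<longlongrightarrow> (u r0)\<^sup>2) (at_right (ereal r0))"
      unfolding ereal_tendsto_simps1 by (intro tendsto_intros)
    show "(((\<lambda>s. (u s)\<^sup>2) \<circ> real_of_ereal) \<longlongrightarrow> 0) (at_left (ereal R))"
      unfolding ereal_tendsto_simps1 using tendsto_power[OF u_tendsto_R, of 2] by simp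
  qed (use r0 in simp)
  then show ?thesis
    using r0 by (simp add: interval_lebesgue_integral_le_eq)
qed

lemma abs_n_ge_1: "1 \<le> \<bar>real_of_int n\<bar>"
  using n_ge_1 by linarith

lemma u_u'_lower_bound:
  assumes s: "s \<in> {0<..<R}"
  shows "- 2 * u_u' s \<le> \<bar>real_of_int n\<bar> * angular_density s + grad_density s / \<bar>real_of_int n\<bar>"
proof -
  define m where "m = \<bar>real_of_int n\<bar>"
  have m: "m \<ge> 1" unfolding m_def by (rule abs_n_ge_1)
  have s0: "s > 0" using s by simp
  have "0 \<le> (m * u s + s * u' s)\<^sup>2 / (s * m)" using s0 m by simp
  also have "\<dots> = m * angular_density s + grad_density s / m + 2 * u_u' s"
    unfolding angular_density_def grad_density_def u_u'_def using s0 m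
    by (simp add: field_simps power2_eq_square)
  finally show ?thesis unfolding m_def by simp
qed

lemma u_sq_le_angular_grad:
  assumes r0: "r0 \<in> {0<..<R}"
  shows "(u r0)\<^sup>2 \<le> \<bar>real_of_int n\<bar> * angular_term + grad_term / \<bar>real_of_int n\<bar>"
proof -
  define m where "m = \<bar>real_of_int n\<bar>"
  have m: "m \<ge> 1" unfolding m_def by (rule abs_n_ge_1)
  define k where "k s = m * angular_density s + grad_density s / m" for s
  have k_integrable: "set_integrable lborel {0<..<R} k"
    unfolding k_def using densities_integrable by simp
  have sub: "{r0<..<R} \<subseteq> {0<..<R}" using r0 by auto
  have "(u r0)\<^sup>2 = (LINT s:{r0<..<R}|lborel. - 2 * u_u' s)"
    unfolding u_sq_eq_integral[OF r0] by (rule set_integral_mult_right[symmetric])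
  also have "\<dots> \<le> (LINT s:{r0<..<R}|lborel. k s)"
  proof (rule set_integral_mono)
    show "set_integrable lborel {r0<..<R} (\<lambda>s. - 2 * u_u' s)"
      by (rule set_integrable_mult_right, rule set_integrable_subset[OF densities_integrable(6) _ sub])
        simp
    show "set_integrable lborel {r0<..<R} k" by (rule set_integrable_subset[OF k_integrable _ sub]) simp
  qed (use sub u_u'_lower_bound in \<open>auto simp: k_def m_def\<close>)
  also have "\<dots> \<le> (LINT s:{0<..<R}|lborel. k s)"
  proof (rule set_integral_mono_set_nonneg[OF k_integrable sub])
    fix s assume "s \<in> {0<..<R}"
    then show "0 \<le> k s" unfolding k_def using m density_nonneg(1,2)[of s] by simp
  qed simp
  also have "\<dots> = m * angular_term + grad_term / m"
    unfolding k_def grad_term_def angular_term_def using densities_integrable by simp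
  finally show ?thesis unfolding m_def .
qed

lemma actionI_eq:
  "actionI n \<alpha> R u = grad_term / 2 + (real_of_int n)\<^sup>2 * angular_term / 2 - mass / \<alpha> + log_term / \<alpha>\<^sup>2"
proof -
  define f where "f r = 1/2 * grad_density r + (real_of_int n)\<^sup>2 / 2 * angular_density r
    - 1 / \<alpha> * mass_density r + 1 / \<alpha>\<^sup>2 * log_density r" for r
  have "set_integrable lborel {0<..<R} f" unfolding f_def using densities_integrable by simp
  then have "actionI n \<alpha> R u = (LINT x:{0<..<R}|lborel. f x)"
    unfolding actionI_def grad_density_def angular_density_def mass_density_def log_density_def f_def
    by (subst set_lebesgue_integral_completion[symmetric]) (auto simp: field_simps)
  also have "\<dots> = grad_term / 2 + (real_of_int n)\<^sup>2 * angular_term / 2 - mass / \<alpha> + log_term / \<alpha>\<^sup>2"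
    unfolding f_def grad_term_def angular_term_def mass_def log_term_def
    using densities_integrable by simp
  finally show ?thesis .
qed

lemma fluxQ_eq: "fluxQ R u = 2 * pi * mass"
  unfolding fluxQ_def mass_def mass_density_def
  using set_lebesgue_integral_completion[OF densities_integrable(3)] by (simp add: mass_density_def)

lemma saturation_term_lower_bound: "mass / \<alpha> - log_term / \<alpha>\<^sup>2 \<le> saturation_term"
proof -
  have "(LINT x:{0<..<R}|lborel. mass_density x / \<alpha> - log_density x / \<alpha>\<^sup>2) \<le> saturation_term"
    unfolding saturation_term_def
  proof (rule set_integral_mono)
    fix r assume r: "r \<in> {0<..<R}"
    have "r * ((u r)\<^sup>2 / \<alpha> - ln (1 + \<alpha> * (u r)\<^sup>2) / \<alpha>\<^sup>2) \<le> r * (((u r)\<^sup>2)\<^sup>2 / (1 + \<alpha> * (u r)\<^sup>2))"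
      using r alpha_pos by (intro mult_left_mono sq_div_one_plus_ge_linear_minus_ln) auto
    then show "mass_density r / \<alpha> - log_density r / \<alpha>\<^sup>2 \<le> saturation_density r"
      unfolding mass_density_def log_density_def saturation_density_def
      by (simp add: field_simps power2_eq_square power4_eq_xxxx)
  qed (use densities_integrable in auto)
  then show ?thesis unfolding mass_def log_term_def using densities_integrable by simp
qed

lemma neg_action_le_kappa_mass: "- actionI n \<alpha> R u \<le> \<kappa> * mass"
  using energy_identity saturation_term_lower_bound actionI_eq by linarith

lemma angular_grad_le: "\<bar>real_of_int n\<bar> * angular_term + grad_term / \<bar>real_of_int n\<bar>
    \<le> grad_term + (real_of_int n)\<^sup>2 * angular_term"
proof -
  define m where "m = \<bar>real_of_int n\<bar>"
  have m: "m \<ge> 1" unfolding m_def by (rule abs_n_ge_1)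
  have "m * angular_term \<le> (m * m) * angular_term"
    using m terms_nonneg by (intro mult_right_mono) auto
  also have "m * m = (real_of_int n)\<^sup>2" unfolding m_def by (simp add: power2_eq_square)
  finally have "m * angular_term \<le> (real_of_int n)\<^sup>2 * angular_term" .
  moreover have "grad_term / m \<le> grad_term"
    using m terms_nonneg by (simp add: divide_le_eq mult_le_cancel_left1)
  ultimately show ?thesis unfolding m_def by linarith
qed

lemma u_sq_le_action:
  assumes r: "r \<in> {0..R}"
  shows "(u r)\<^sup>2 \<le> 2 * actionI n \<alpha> R u + 2 * mass / \<alpha>"
proof -
  have "0 \<le> log_term / \<alpha>\<^sup>2" using terms_nonneg alpha_pos by simp
  then have bound: "grad_term + (real_of_int n)\<^sup>2 * angular_term \<le> 2 * actionI n \<alpha> R u + 2 * mass / \<alpha>"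
    using actionI_eq by simp
  show ?thesis
  proof (cases "r \<in> {0<..<R}")
    case True
    with u_sq_le_angular_grad angular_grad_le bound show ?thesis by (meson order_trans)
  next
    case False
    then have "u r = 0" using r u_0 u_R by auto
    moreover have "0 \<le> grad_term + (real_of_int n)\<^sup>2 * angular_term" using terms_nonneg by simp
    ultimately show ?thesis using bound by simp
  qed
qed

text \<open>From \<open>u\<^sup>2 \<le> S := |n| angular_term + grad_term / |n|\<close> we get
  \<open>saturation_term < S \<cdot> mass\<close>, and \<open>2 \<cdot> mass \<le> |n|\<close> makes \<open>2 S \<cdot> mass\<close> at most
  \<open>grad_term + n\<^sup>2 angular_term\<close>; compare with the energy identity.\<close>
lemma kappa_neg_if_small_mass:
  assumes mass_pos: "0 < mass" and small: "2 * mass \<le> \<bar>real_of_int n\<bar>"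
  shows "\<kappa> < 0"
proof -
  define m where "m = \<bar>real_of_int n\<bar>"
  have m: "m \<ge> 1" unfolding m_def by (rule abs_n_ge_1)
  define S where "S = m * angular_term + grad_term / m"
  define h where "h x = S * mass_density x - saturation_density x" for x
  have "0 < h x" if x: "x \<in> {0<..<R}" for x
  proof -
    define y where "y = (u x)\<^sup>2"
    have "0 < u x" using u_pos x by blast
    then have y0: "0 < y" unfolding y_def by simp
    have yS: "y \<le> S" unfolding y_def S_def m_def by (rule u_sq_le_angular_grad[OF x])
    have "y / (1 + \<alpha> * y) < y" using alpha_pos y0 by (simp add: divide_less_eq)
    then have "0 < x * y * (S - y / (1 + \<alpha> * y))" using yS x y0 by simp
    also have "\<dots> = h x"
      unfolding h_def mass_density_def saturation_density_def y_def
      by (simp add: field_simps power2_eq_square power4_eq_xxxx)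
    finally show ?thesis .
  qed
  then have "0 < (LINT x:{0<..<R}|lborel. h x)"
    using R_pos densities_integrable unfolding h_def by (intro set_integral_pos_Ioo) auto
  also have "(LINT x:{0<..<R}|lborel. h x) = S * mass - saturation_term"
    unfolding h_def mass_def saturation_term_def using densities_integrable by simp
  finally have "saturation_term < S * mass" by simp
  moreover have "2 * (S * mass) \<le> grad_term + (real_of_int n)\<^sup>2 * angular_term"
  proof -
    have "2 * mass * m \<le> m * m" using small m unfolding m_def by (intro mult_right_mono) auto
    then have "(2 * mass * m) * angular_term \<le> (m * m) * angular_term"
      by (rule mult_right_mono) (use terms_nonneg in auto)
    also have "m * m = (real_of_int n)\<^sup>2" unfolding m_def by (simp add: power2_eq_square)
    finally have angular: "(2 * mass * m) * angular_term \<le> (real_of_int n)\<^sup>2 * angular_term" .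
    have "2 * mass / m \<le> 1" using small m unfolding m_def by simp
    then have grad: "(2 * mass / m) * grad_term \<le> grad_term"
      using terms_nonneg mult_right_mono[of "2 * mass / m" 1 grad_term] by simp
    have "2 * (S * mass) = (2 * mass * m) * angular_term + (2 * mass / m) * grad_term"
      unfolding S_def by (simp add: algebra_simps)
    with angular grad show ?thesis by linarith
  qed
  ultimately have "\<kappa> * mass < 0" using energy_identity by linarith
  then show ?thesis using mass_pos by (simp add: mult_less_0_iff)
qed

end

section \<open>The tent competitor\<close>

lemma set_integral_Ioo_split_continuous:
  fixes f f1 f2 :: "real \<Rightarrow> real"
  assumes ah: "a < h" and hb: "h < b"
    and c1: "continuous_on {a..h} f1" and c2: "continuous_on {h..b} f2"
    and e1: "\<And>x. x \<in> {a<..<h} \<Longrightarrow> f x = f1 x" and e2: "\<And>x. x \<in> {h<..<b} \<Longrightarrow> f x = f2 x"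
    and i1: "(f1 has_integral I1) {a..h}" and i2: "(f2 has_integral I2) {h..b}"
  shows "set_integrable lebesgue {a<..<b} f" "(LINT x:{a<..<b}|lebesgue. f x) = I1 + I2"
proof -
  have "f absolutely_integrable_on {a..h}"
    by (rule absolutely_integrable_spike[OF absolutely_integrable_continuous_real[OF c1], of "{a,h}"])
       (use e1 in auto)
  moreover have "f absolutely_integrable_on {h..b}"
    by (rule absolutely_integrable_spike[OF absolutely_integrable_continuous_real[OF c2], of "{h,b}"])
       (use e2 in auto)
  ultimately have "f absolutely_integrable_on ({a..h} \<union> {h..b})"
    by (rule set_integrable_Un) auto
  moreover have "{a..h} \<union> {h..b} = {a..b}" using ah hb by auto
  ultimately show integrable: "set_integrable lebesgue {a<..<b} f"
    by (simp add: absolutely_integrable_on_Icc_iff_Ioo)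
  have "(f has_integral I1) {a..h}"
    by (rule has_integral_spike_finite[OF _ _ i1, of "{a,h}"]) (use e1 in auto)
  moreover have "(f has_integral I2) {h..b}"
    by (rule has_integral_spike_finite[OF _ _ i2, of "{h,b}"]) (use e2 in auto)
  ultimately have "(f has_integral I1 + I2) {a..b}"
    by (rule has_integral_combine[rotated 2]) (use ah hb in auto)
  then have "(f has_integral I1 + I2) {a<..<b}" by (simp add: has_integral_Icc_iff_Ioo)
  then show "(LINT x:{a<..<b}|lebesgue. f x) = I1 + I2"
    using set_lebesgue_integral_eq_integral(2)[OF integrable] by (simp add: integral_unique)
qed

definition s_log_primitive :: "real \<Rightarrow> real \<Rightarrow> real" where
  "s_log_primitive \<beta> s = ((1 + \<beta> * s\<^sup>2) * ln (1 + \<beta> * s\<^sup>2) - \<beta> * s\<^sup>2) / (2 * \<beta>)"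

definition log_primitive :: "real \<Rightarrow> real \<Rightarrow> real" where
  "log_primitive \<beta> s = s * ln (1 + \<beta> * s\<^sup>2) - 2 * s + 2 / sqrt \<beta> * arctan (sqrt \<beta> * s)"

lemma one_plus_sq_has_derivative:
  "((\<lambda>s. 1 + \<beta> * s\<^sup>2) has_real_derivative 2 * \<beta> * s) (at s)"
  by (auto intro!: derivative_eq_intros)

lemma s_log_primitive_has_derivative:
  assumes \<beta>: "0 < \<beta>"
  shows "(s_log_primitive \<beta> has_real_derivative s * ln (1 + \<beta> * s\<^sup>2)) (at s)"
proof -
  define T where "T = 1 + \<beta> * s\<^sup>2"
  have T: "0 < T" unfolding T_def using \<beta> by (simp add: add_pos_nonneg)
  have "((\<lambda>t. t * ln t - t) has_real_derivative (1 * ln T + inverse T * T) - 1) (at T)"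
    by (intro DERIV_diff DERIV_mult DERIV_ident DERIV_ln T)
  then have outer: "((\<lambda>t. t * ln t - t) has_real_derivative ln T) (at T)" using T by simp
  have "((\<lambda>s. ((\<lambda>t. t * ln t - t) (1 + \<beta> * s\<^sup>2) + 1) / (2 * \<beta>)) has_real_derivative
      (ln T * (2 * \<beta> * s) + 0) / (2 * \<beta>)) (at s)"
    by (intro DERIV_cdivide DERIV_add DERIV_const DERIV_chain2[OF _ one_plus_sq_has_derivative])
       (use outer T_def in simp)
  moreover have "(\<lambda>s. ((\<lambda>t. t * ln t - t) (1 + \<beta> * s\<^sup>2) + 1) / (2 * \<beta>)) = s_log_primitive \<beta>"
    unfolding s_log_primitive_def by (rule ext) (simp add: algebra_simps)
  ultimately show ?thesis unfolding T_def using \<beta> by (simp add: mult.commute)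
qed

lemma log_primitive_has_derivative:
  assumes \<beta>: "0 < \<beta>"
  shows "(log_primitive \<beta> has_real_derivative ln (1 + \<beta> * s\<^sup>2)) (at s)"
proof -
  define T where "T = 1 + \<beta> * s\<^sup>2"
  define q where "q = sqrt \<beta>"
  have T: "0 < T" unfolding T_def using \<beta> by (simp add: add_pos_nonneg)
  have q: "0 < q" "q * q = \<beta>" unfolding q_def using \<beta> by auto
  have dlog: "((\<lambda>s. ln (1 + \<beta> * s\<^sup>2)) has_real_derivative inverse T * (2 * \<beta> * s)) (at s)"
    by (rule DERIV_chain2[OF _ one_plus_sq_has_derivative]) (use T T_def in \<open>simp add: DERIV_ln\<close>)
  have darctan: "((\<lambda>s. arctan (q * s)) has_real_derivative inverse (1 + (q * s)\<^sup>2) * q) (at s)"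
    by (rule DERIV_chain2[OF DERIV_arctan]) (rule DERIV_cmult_Id)
  have deriv: "((\<lambda>s. s * ln (1 + \<beta> * s\<^sup>2) - 2 * s + 2 / q * arctan (q * s)) has_real_derivative
      (1 * ln T + inverse T * (2 * \<beta> * s) * s) - 2 * 1 + 2 / q * (inverse (1 + (q * s)\<^sup>2) * q)) (at s)"
    unfolding T_def by (intro DERIV_add DERIV_diff DERIV_mult DERIV_ident dlog[unfolded T_def]
        DERIV_cmult darctan)
  have "1 + (q * s)\<^sup>2 = T" unfolding T_def using q by (simp add: power2_eq_square algebra_simps)
  moreover have "inverse T * (2 * \<beta> * s) * s = 2 * (T - 1) / T"
    using T unfolding T_def by (simp add: field_simps power2_eq_square)
  moreover have "2 / q * (inverse T * q) = 2 / T" using q by (simp add: field_simps)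
  moreover have "2 * (T - 1) / T - 2 + 2 / T = 0" using T by (simp add: field_simps)
  ultimately have deriv_value: "(1 * ln T + inverse T * (2 * \<beta> * s) * s) - 2 * 1
      + 2 / q * (inverse (1 + (q * s)\<^sup>2) * q) = ln T" by simp
  have primitive: "(\<lambda>s. s * ln (1 + \<beta> * s\<^sup>2) - 2 * s + 2 / q * arctan (q * s)) = log_primitive \<beta>"
    unfolding log_primitive_def q_def ..
  from deriv[unfolded deriv_value primitive] show ?thesis unfolding T_def .
qed

lemma log_primitive_eq_sqrt:
  assumes "0 < \<beta>" "0 < s"
  shows "log_primitive \<beta> s
    = s * (ln (1 + \<beta> * s\<^sup>2) - 2) + 2 * s / sqrt (\<beta> * s\<^sup>2) * arctan (sqrt (\<beta> * s\<^sup>2))"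
proof -
  have "sqrt (\<beta> * s\<^sup>2) = sqrt \<beta> * s" using assms by (simp add: real_sqrt_mult)
  then show ?thesis unfolding log_primitive_def using assms by (simp add: field_simps)
qed

lemma s_log_primitive_chain:
  assumes "0 < \<beta>" "(f has_real_derivative f') (at x)" "D = f x * ln (1 + \<beta> * (f x)\<^sup>2) * f'"
  shows "((\<lambda>x. s_log_primitive \<beta> (f x)) has_real_derivative D) (at x)"
  using DERIV_chain2[OF s_log_primitive_has_derivative[OF assms(1)] assms(2)] assms(3) by simp

lemma log_primitive_chain:
  assumes "0 < \<beta>" "(f has_real_derivative f') (at x)" "D = ln (1 + \<beta> * (f x)\<^sup>2) * f'"
  shows "((\<lambda>x. log_primitive \<beta> (f x)) has_real_derivative D) (at x)"
  using DERIV_chain2[OF log_primitive_has_derivative[OF assms(1)] assms(2)] assms(3) by simp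

locale tent_profile =
  fixes \<alpha> R c :: real
  assumes alpha_pos: "\<alpha> > 0" and R_pos: "R > 0" and c_pos: "c > 0"
begin

definition "v r = c * min r (R - r)"

abbreviation "mid \<equiv> R / 2"

lemma mid_pos: "0 < mid" "mid < R" using R_pos by auto

lemma v_left: "r \<in> {0<..<mid} \<Longrightarrow> v r = c * r"
  unfolding v_def by (auto simp: min_def)

lemma v_right: "r \<in> {mid<..<R} \<Longrightarrow> v r = c * (R - r)"
  unfolding v_def by (auto simp: min_def)

lemma deriv_v_left: "r \<in> {0<..<mid} \<Longrightarrow> deriv v r = c"
proof -
  assume r: "r \<in> {0<..<mid}"
  have "((\<lambda>x. c * x) has_real_derivative c) (at r)" using DERIV_cmult_Id by blast
  then have "(v has_real_derivative c) (at r)"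
    by (rule has_field_derivative_transform_within_open[of _ _ _ "{0<..<mid}"])
       (use r in \<open>auto simp: v_left\<close>)
  then show ?thesis by (rule DERIV_imp_deriv)
qed

lemma deriv_v_right: "r \<in> {mid<..<R} \<Longrightarrow> deriv v r = - c"
proof -
  assume r: "r \<in> {mid<..<R}"
  have "((\<lambda>x. c * (R - x)) has_real_derivative - c) (at r)"
    by (auto intro!: derivative_eq_intros)
  then have "(v has_real_derivative - c) (at r)"
    by (rule has_field_derivative_transform_within_open[of _ _ _ "{mid<..<R}"])
       (use r in \<open>auto simp: v_right\<close>)
  then show ?thesis by (rule DERIV_imp_deriv)
qed

lemma v_lipschitz: "\<bar>v t - v s\<bar> \<le> c * \<bar>t - s\<bar>"
proof -
  have "\<bar>min t (R - t) - min s (R - s)\<bar> \<le> \<bar>t - s\<bar>" by (auto simp: min_def abs_if)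
  then show ?thesis
    unfolding v_def using c_pos by (simp add: abs_mult right_diff_distrib[symmetric] mult_left_mono)
qed

lemma v_abs_continuous: "abs_continuous_on 0 R v"
  unfolding abs_continuous_on_def
proof (intro allI impI)
  fix e :: real assume e: "0 < e"
  define d where "d = e / (c + 1)"
  have d: "0 < d" "c * d < e" unfolding d_def using e c_pos by (auto simp: field_simps)
  show "\<exists>d>0. \<forall>(k::nat) (s::nat \<Rightarrow> real) (t::nat \<Rightarrow> real).
        (\<forall>i<k. 0 \<le> s i \<and> s i \<le> t i \<and> t i \<le> R) \<and>
        (\<forall>i<k. \<forall>j<k. i \<noteq> j \<longrightarrow> t i \<le> s j \<or> t j \<le> s i) \<and>
        (\<Sum>i<k. t i - s i) < d
        \<longrightarrow> (\<Sum>i<k. \<bar>v (t i) - v (s i)\<bar>) < e"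
  proof (intro exI[of _ d] conjI d(1) allI impI)
    fix k :: nat and s t :: "nat \<Rightarrow> real"
    assume H: "(\<forall>i<k. 0 \<le> s i \<and> s i \<le> t i \<and> t i \<le> R) \<and>
        (\<forall>i<k. \<forall>j<k. i \<noteq> j \<longrightarrow> t i \<le> s j \<or> t j \<le> s i) \<and>
        (\<Sum>i<k. t i - s i) < d"
    have "(\<Sum>i<k. \<bar>v (t i) - v (s i)\<bar>) \<le> (\<Sum>i<k. c * (t i - s i))"
      using H v_lipschitz by (intro sum_mono) (metis lessThan_iff abs_of_nonneg diff_ge_0_iff_ge)
    also have "\<dots> = c * (\<Sum>i<k. t i - s i)" by (simp add: sum_distrib_left)
    also have "\<dots> \<le> c * d" using H c_pos by (intro mult_left_mono) auto
    finally show "(\<Sum>i<k. \<bar>v (t i) - v (s i)\<bar>) < e" using d by linarith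
  qed
qed

lemma fluxQ_v: "fluxQ R v = 2 * pi * (c\<^sup>2 * R^4 / 24)"
proof -
  let ?G1 = "\<lambda>r. c\<^sup>2 * r^4 / 4"
  let ?G2 = "\<lambda>r. c\<^sup>2 * (R\<^sup>2 * r\<^sup>2 / 2 - 2 * R * r^3 / 3 + r^4 / 4)"
  have i1: "((\<lambda>r. c\<^sup>2 * r^3) has_integral ?G1 mid - ?G1 0) {0..mid}"
    by (rule has_integral_real_derivative)
       (use mid_pos in \<open>auto intro!: derivative_eq_intros simp: field_simps\<close>)
  have i2: "((\<lambda>r. c\<^sup>2 * (r * (R - r)\<^sup>2)) has_integral ?G2 R - ?G2 mid) {mid..R}"
    by (rule has_integral_real_derivative)
       (use mid_pos in \<open>auto intro!: derivative_eq_intros simp: field_simps power2_eq_square power3_eq_cube\<close>)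
  have "(LINT r:{0<..<R}|lebesgue. r * (v r)\<^sup>2) = (?G1 mid - ?G1 0) + (?G2 R - ?G2 mid)"
  proof (rule set_integral_Ioo_split_continuous(2)[OF mid_pos _ _ _ _ i1 i2])
    show "x * (v x)\<^sup>2 = c\<^sup>2 * x^3" if "x \<in> {0<..<mid}" for x
      using v_left[OF that] by (simp add: power2_eq_square power3_eq_cube)
    show "x * (v x)\<^sup>2 = c\<^sup>2 * (x * (R - x)\<^sup>2)" if "x \<in> {mid<..<R}" for x
      using v_right[OF that] by (simp add: power2_eq_square)
  qed (auto intro!: continuous_intros)
  also have "\<dots> = c\<^sup>2 * R^4 / 24" by (simp add: field_simps power4_eq_xxxx power3_eq_cube)
  finally show ?thesis unfolding fluxQ_def by simp
qed

lemma energyE_v_finite: "energyE \<alpha> R v < \<infinity>"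
proof -
  define e where "e r = 1/2 * (r * (deriv v r)\<^sup>2 + (1/r) * (v r)\<^sup>2 + r * ln (1 + \<alpha> * (v r)\<^sup>2))" for r
  let ?e1 = "\<lambda>r. 1/2 * (r * c\<^sup>2 + c\<^sup>2 * r + r * ln (1 + \<alpha> * (c * r)\<^sup>2))"
  let ?e2 = "\<lambda>r. 1/2 * (r * c\<^sup>2 + c\<^sup>2 * (R - r)\<^sup>2 / r + r * ln (1 + \<alpha> * (c * (R - r))\<^sup>2))"
  have pos: "0 < 1 + \<alpha> * y\<^sup>2" for y using alpha_pos by (simp add: add_pos_nonneg)
  have c1: "continuous_on {0..mid} ?e1"
    by (intro continuous_intros continuous_on_ln) (use pos in \<open>auto simp: less_imp_neq[symmetric]\<close>)
  have c2: "continuous_on {mid..R} ?e2"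
    by (intro continuous_intros continuous_on_ln) (use pos mid_pos in \<open>auto simp: less_imp_neq[symmetric]\<close>)
  have "set_integrable lebesgue {0<..<R} e"
  proof (rule set_integral_Ioo_split_continuous(1)[OF mid_pos c1 c2])
    show "e x = ?e1 x" if "x \<in> {0<..<mid}" for x
      using v_left[OF that] deriv_v_left[OF that] that unfolding e_def by (simp add: power2_eq_square)
    show "e x = ?e2 x" if "x \<in> {mid<..<R}" for x
      using v_right[OF that] deriv_v_right[OF that] that unfolding e_def by (simp add: power2_eq_square)
  qed (use c1 c2 integrable_continuous_real in \<open>blast intro: integrable_integral\<close>)+
  then have "(\<integral>\<^sup>+x. ennreal (norm (indicator {0<..<R} x *\<^sub>R e x)) \<partial>lebesgue) < \<infinity>"
    by (simp add: set_integrable_def integrable_iff_bounded)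
  moreover have "energyE \<alpha> R v \<le> (\<integral>\<^sup>+x. ennreal (norm (indicator {0<..<R} x *\<^sub>R e x)) \<partial>lebesgue)"
    unfolding energyE_def e_def[symmetric]
    by (intro nn_integral_mono) (auto simp: indicator_def intro: ennreal_leI)
  ultimately show ?thesis by (rule le_less_trans[rotated])
qed

lemma admissible_v: "admissible \<alpha> R v"
  unfolding admissible_def using v_abs_continuous energyE_v_finite R_pos by (simp add: v_def)

abbreviation "\<beta> \<equiv> \<alpha> * c\<^sup>2"

lemma beta_pos: "0 < \<beta>" using alpha_pos c_pos by simp

lemma actionI_v: "actionI n \<alpha> R v =
   c\<^sup>2 * R\<^sup>2 / 4 + (real_of_int n)\<^sup>2 * c\<^sup>2 * R\<^sup>2 * (ln 2 - 1/2) / 2 - c\<^sup>2 * R^4 / (24 * \<alpha>)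
   + R * log_primitive \<beta> mid / \<alpha>\<^sup>2"
proof -
  let ?N = "(real_of_int n)\<^sup>2"
  let ?f1 = "\<lambda>r. 1/2 * (r * c\<^sup>2 + ?N * c\<^sup>2 * r - 2/\<alpha> * c\<^sup>2 * r^3 + 2/\<alpha>\<^sup>2 * (r * ln (1 + \<beta> * r\<^sup>2)))"
  let ?G1 = "\<lambda>r. 1/2 * (c\<^sup>2 * r\<^sup>2 / 2 + ?N * c\<^sup>2 * r\<^sup>2 / 2 - 2/\<alpha> * c\<^sup>2 * r^4 / 4
    + 2/\<alpha>\<^sup>2 * s_log_primitive \<beta> r)"
  let ?f2 = "\<lambda>r. 1/2 * (r * c\<^sup>2 + ?N * c\<^sup>2 * ((R - r)\<^sup>2 / r) - 2/\<alpha> * c\<^sup>2 * (r * (R - r)\<^sup>2)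
    + 2/\<alpha>\<^sup>2 * (r * ln (1 + \<beta> * (R - r)\<^sup>2)))"
  let ?G2 = "\<lambda>r. 1/2 * (c\<^sup>2 * r\<^sup>2 / 2 + ?N * c\<^sup>2 * (R\<^sup>2 * ln r - 2 * R * r + r\<^sup>2 / 2)
    - 2/\<alpha> * c\<^sup>2 * (R\<^sup>2 * r\<^sup>2 / 2 - 2 * R * r^3 / 3 + r^4 / 4)
    + 2/\<alpha>\<^sup>2 * (s_log_primitive \<beta> (R - r) - R * log_primitive \<beta> (R - r)))"
  have pos: "0 < 1 + \<beta> * y\<^sup>2" for y using beta_pos by (simp add: add_pos_nonneg)
  have i1: "(?f1 has_integral ?G1 mid - ?G1 0) {0..mid}"
    by (rule has_integral_real_derivative) (use mid_pos alpha_pos beta_pos in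
        \<open>auto intro!: derivative_eq_intros s_log_primitive_chain
           simp: field_simps power2_eq_square power3_eq_cube\<close>)
  have i2: "(?f2 has_integral ?G2 R - ?G2 mid) {mid..R}"
    by (rule has_integral_real_derivative) (use mid_pos alpha_pos beta_pos in
        \<open>auto intro!: derivative_eq_intros s_log_primitive_chain log_primitive_chain
           simp: field_simps power2_eq_square power3_eq_cube\<close>)
  have "actionI n \<alpha> R v = (?G1 mid - ?G1 0) + (?G2 R - ?G2 mid)"
    unfolding actionI_def
  proof (rule set_integral_Ioo_split_continuous(2)[OF mid_pos _ _ _ _ i1 i2])
    show "continuous_on {0..mid} ?f1"
      by (intro continuous_intros continuous_on_ln) (use pos in \<open>auto simp: less_imp_neq[symmetric]\<close>)
    show "continuous_on {mid..R} ?f2"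
      by (intro continuous_intros continuous_on_ln)
         (use pos mid_pos in \<open>auto simp: less_imp_neq[symmetric]\<close>)
  next
    fix x assume x: "x \<in> {0<..<mid}"
    show "1/2 * (x * (deriv v x)\<^sup>2 + ?N / x * (v x)\<^sup>2
             - 2 / \<alpha> * x * (v x)\<^sup>2 + 2 / \<alpha>\<^sup>2 * x * ln (1 + \<alpha> * (v x)\<^sup>2)) = ?f1 x"
      using x unfolding v_left[OF x] deriv_v_left[OF x]
      by (simp add: power2_eq_square power3_eq_cube field_simps)
  next
    fix x assume x: "x \<in> {mid<..<R}"
    show "1/2 * (x * (deriv v x)\<^sup>2 + ?N / x * (v x)\<^sup>2
             - 2 / \<alpha> * x * (v x)\<^sup>2 + 2 / \<alpha>\<^sup>2 * x * ln (1 + \<alpha> * (v x)\<^sup>2)) = ?f2 x"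
      using x unfolding v_right[OF x] deriv_v_right[OF x]
      by (simp add: power2_eq_square power3_eq_cube field_simps)
  qed
  also have "\<dots> = c\<^sup>2 * R\<^sup>2 / 4 + ?N * c\<^sup>2 * R\<^sup>2 * (ln 2 - 1/2) / 2 - c\<^sup>2 * R^4 / (24 * \<alpha>)
      + R * log_primitive \<beta> mid / \<alpha>\<^sup>2"
  proof -
    have ln_mid: "ln mid = ln R - ln 2" using R_pos by (simp add: ln_div)
    have R_mid: "R - mid = mid" by simp
    have "s_log_primitive \<beta> 0 = 0" "log_primitive \<beta> 0 = 0"
      unfolding s_log_primitive_def log_primitive_def by simp_all
    then show ?thesis unfolding ln_mid R_mid using alpha_pos R_pos
      by (simp add: field_simps power2_eq_square power3_eq_cube power4_eq_xxxx)
  qed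
  finally show ?thesis .
qed

end

text \<open>The value \<open>-2\<pi> I(v)/Q\<^sub>0\<close> for the tent \<open>v\<close> of slope \<open>sqrt (12 Q\<^sub>0/(\<pi> R\<^sup>4))\<close>,
  the slope for which \<open>v\<close> has flux \<open>Q\<^sub>0\<close>.\<close>
definition kappa_lower_bound :: "int \<Rightarrow> real \<Rightarrow> real \<Rightarrow> real \<Rightarrow> real" where
  "kappa_lower_bound n \<alpha> R Q0 = 1/\<alpha> - 6 / R\<^sup>2 * (1 + (real_of_int n)\<^sup>2 * (2 * ln 2 - 1))
     - pi * R\<^sup>2 / (\<alpha>\<^sup>2 * Q0) *
       (ln (1 + 3 * \<alpha> * Q0 / (pi * R\<^sup>2)) - 2
        + sqrt (4 * pi * R\<^sup>2 / (3 * \<alpha> * Q0)) * arctan (sqrt (3 * \<alpha> * Q0 / (pi * R\<^sup>2))))"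

lemma tent_competitor:
  assumes "\<alpha> > 0" and R: "R > 0" and Q0: "Q0 > 0"
  obtains v where "admissible \<alpha> R v" "fluxQ R v = Q0"
    "actionI n \<alpha> R v = - (Q0 / (2 * pi)) * kappa_lower_bound n \<alpha> R Q0"
proof -
  define c where "c = sqrt (12 * Q0 / (pi * R^4))"
  have c2: "c\<^sup>2 = 12 * Q0 / (pi * R^4)" unfolding c_def using R Q0 by simp
  interpret tent_profile \<alpha> R c using assms by unfold_locales (auto simp: c_def)
  have flux: "fluxQ R v = Q0" unfolding fluxQ_v c2 using R by (simp add: field_simps)
  define x where "x = 3 * \<alpha> * Q0 / (pi * R\<^sup>2)"
  have x: "0 < x" unfolding x_def using assms by simp
  have "\<beta> * mid\<^sup>2 = x" unfolding c2 x_def using R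
    by (simp add: field_simps power2_eq_square power4_eq_xxxx)
  then have primitive: "log_primitive \<beta> mid = R / 2 * (ln (1 + x) - 2) + R / sqrt x * arctan (sqrt x)"
    using log_primitive_eq_sqrt[OF beta_pos mid_pos(1)] by simp
  have sqrt_inv: "sqrt (4 * pi * R\<^sup>2 / (3 * \<alpha> * Q0)) = 2 / sqrt x"
  proof -
    have "4 * pi * R\<^sup>2 / (3 * \<alpha> * Q0) = 4 / x" unfolding x_def using assms by (simp add: field_simps)
    then show ?thesis by (simp add: real_sqrt_divide)
  qed
  have "actionI n \<alpha> R v = - (Q0 / (2 * pi)) * kappa_lower_bound n \<alpha> R Q0"
    unfolding kappa_lower_bound_def actionI_v primitive sqrt_inv
    unfolding c2 x_def[symmetric] using assms x
    by (simp add: field_simps power2_eq_square power4_eq_xxxx)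
  with admissible_v flux show ?thesis by (rule that)
qed

section \<open>Constrained minimizers\<close>

lemma radial_solution_of_hyp32:
  assumes "\<bar>n\<bar> \<ge> 1" "\<alpha> > 0" "R > 0" "hyp32 n \<alpha> R Q0 u \<kappa>"
  shows "radial_solution n \<alpha> R \<kappa> u"
  using assms unfolding radial_solution_def hyp32_def constrained_minimizer_def by auto

lemma hyp32_mass:
  assumes "\<bar>n\<bar> \<ge> 1" "\<alpha> > 0" "R > 0" "hyp32 n \<alpha> R Q0 u \<kappa>"
  shows "radial_solution.mass R u = Q0 / (2 * pi)"
proof -
  interpret radial_solution n \<alpha> R \<kappa> u by (rule radial_solution_of_hyp32[OF assms])
  have "fluxQ R u = Q0" using assms(4) unfolding hyp32_def constrained_minimizer_def by blast
  then show ?thesis using fluxQ_eq by (auto simp: field_simps)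
qed

lemma hyp32_action_le:
  assumes "\<alpha> > 0" "R > 0" "Q0 > 0" "hyp32 n \<alpha> R Q0 u \<kappa>"
  shows "actionI n \<alpha> R u \<le> - (Q0 / (2 * pi)) * kappa_lower_bound n \<alpha> R Q0"
proof -
  obtain v where "admissible \<alpha> R v" "fluxQ R v = Q0"
    "actionI n \<alpha> R v = - (Q0 / (2 * pi)) * kappa_lower_bound n \<alpha> R Q0"
    using tent_competitor[OF assms(1-3)] by blast
  with assms(4) show ?thesis unfolding hyp32_def constrained_minimizer_def by metis
qed

lemma hyp32_kappa_ge:
  assumes "\<bar>n\<bar> \<ge> 1" "\<alpha> > 0" "R > 0" "Q0 > 0" "hyp32 n \<alpha> R Q0 u \<kappa>"
  shows "kappa_lower_bound n \<alpha> R Q0 \<le> \<kappa>"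
proof -
  interpret radial_solution n \<alpha> R \<kappa> u by (rule radial_solution_of_hyp32[OF assms(1-3,5)])
  have mass: "mass = Q0 / (2 * pi)" by (rule hyp32_mass[OF assms(1-3,5)])
  have "(Q0 / (2 * pi)) * kappa_lower_bound n \<alpha> R Q0 \<le> - actionI n \<alpha> R u"
    using hyp32_action_le[OF assms(2-5)] by simp
  also have "\<dots> \<le> (Q0 / (2 * pi)) * \<kappa>" using neg_action_le_kappa_mass mass by (simp add: mult.commute)
  finally show ?thesis by (rule mult_left_le_imp_le) (use assms(4) in simp)
qed

lemma hyp32_kappa_neg:
  assumes "\<bar>n\<bar> \<ge> 1" "\<alpha> > 0" "R > 0" "Q0 > 0" "hyp32 n \<alpha> R Q0 u \<kappa>"
    and "real_of_int \<bar>n\<bar> \<ge> Q0 / pi"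
  shows "\<kappa> < 0"
proof -
  interpret radial_solution n \<alpha> R \<kappa> u by (rule radial_solution_of_hyp32[OF assms(1-3,5)])
  have mass: "mass = Q0 / (2 * pi)" by (rule hyp32_mass[OF assms(1-3,5)])
  show ?thesis by (rule kappa_neg_if_small_mass) (use mass assms(4,6) in auto)
qed

lemma hyp32_u_sq_bounded:
  assumes "\<bar>n\<bar> \<ge> 1" "\<alpha> > 0" "R > 0" "Q0 > 0" "hyp32 n \<alpha> R Q0 u \<kappa>" "r \<in> {0..R}"
  shows "(u r)\<^sup>2 \<le> Q0 / (pi * \<alpha>) - Q0 / pi * kappa_lower_bound n \<alpha> R Q0"
proof -
  interpret radial_solution n \<alpha> R \<kappa> u by (rule radial_solution_of_hyp32[OF assms(1-3,5)])
  have mass: "mass = Q0 / (2 * pi)" by (rule hyp32_mass[OF assms(1-3,5)])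
  have "(u r)\<^sup>2 \<le> 2 * actionI n \<alpha> R u + 2 * mass / \<alpha>" by (rule u_sq_le_action[OF assms(6)])
  also have "2 * mass / \<alpha> = Q0 / (pi * \<alpha>)" using mass by simp
  finally have "(u r)\<^sup>2 \<le> 2 * actionI n \<alpha> R u + Q0 / (pi * \<alpha>)" .
  moreover have "2 * actionI n \<alpha> R u \<le> - (Q0 / pi) * kappa_lower_bound n \<alpha> R Q0"
    using hyp32_action_le[OF assms(2-5)] by simp
  ultimately show ?thesis by simp
qed

lemma const_le_exp_decay:
  fixes K a R :: real assumes "0 \<le> a"
  shows "\<exists>C>0. \<forall>r\<le>R. K \<le> C * exp (- a * r)"
proof (intro exI[of _ "max 1 K * exp (a * R)"] conjI allI impI)
  fix r assume "r \<le> R"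
  then have "1 \<le> exp (a * (R - r))" using assms by simp
  then have "max 1 K \<le> max 1 K * exp (a * (R - r))" by (simp add: mult_le_cancel_left1)
  then have "K \<le> max 1 K * exp (a * (R - r))" by linarith
  also have "\<dots> = max 1 K * exp (a * R) * exp (- a * r)"
    by (simp add: mult.assoc exp_add[symmetric] algebra_simps)
  finally show "K \<le> max 1 K * exp (a * R) * exp (- a * r)" .
qed simp

theorem theorem3p2:
  fixes n :: int and \<alpha> R Q0 :: real
  assumes "\<bar>n\<bar> \<ge> 1" and "\<alpha> > 0" and "R > 0" and "Q0 > 0"
  shows
   "(\<forall>u \<kappa>. hyp32 n \<alpha> R Q0 u \<kappa> \<longrightarrow>
       \<kappa> \<ge> 1/\<alpha> - 6 / R\<^sup>2 * (1 + (real_of_int n)\<^sup>2 * (2 * ln 2 - 1))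
          - pi * R\<^sup>2 / (\<alpha>\<^sup>2 * Q0) *
            (ln (1 + 3 * \<alpha> * Q0 / (pi * R\<^sup>2)) - 2
             + sqrt (4 * pi * R\<^sup>2 / (3 * \<alpha> * Q0)) * arctan (sqrt (3 * \<alpha> * Q0 / (pi * R\<^sup>2)))))
    \<and> (real_of_int \<bar>n\<bar> \<ge> Q0 / pi \<longrightarrow> (\<forall>u \<kappa>. hyp32 n \<alpha> R Q0 u \<kappa> \<longrightarrow> \<kappa> < 0))
    \<and> (\<forall>\<kappa>>0. \<exists>C>0. \<exists>R\<kappa>. 0 \<le> R\<kappa> \<and> R\<kappa> < R \<and>
         (\<forall>u. hyp32 n \<alpha> R Q0 u \<kappa> \<longrightarrow>
            (\<forall>r\<in>{R\<kappa>..R}. (u r)\<^sup>2 \<le> C * exp (- sqrt (2 * \<kappa>) * r))))"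
proof (intro conjI allI impI)
  fix u \<kappa> assume "hyp32 n \<alpha> R Q0 u \<kappa>"
  from hyp32_kappa_ge[OF assms this] show "\<kappa> \<ge> 1/\<alpha> - 6 / R\<^sup>2 * (1 + (real_of_int n)\<^sup>2 * (2 * ln 2 - 1))
          - pi * R\<^sup>2 / (\<alpha>\<^sup>2 * Q0) *
            (ln (1 + 3 * \<alpha> * Q0 / (pi * R\<^sup>2)) - 2
             + sqrt (4 * pi * R\<^sup>2 / (3 * \<alpha> * Q0)) * arctan (sqrt (3 * \<alpha> * Q0 / (pi * R\<^sup>2))))"
    unfolding kappa_lower_bound_def .
next
  fix u \<kappa> assume "real_of_int \<bar>n\<bar> \<ge> Q0 / pi" "hyp32 n \<alpha> R Q0 u \<kappa>"
  then show "\<kappa> < 0" using hyp32_kappa_neg[OF assms] by blast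
next
  fix \<kappa> :: real assume "\<kappa> > 0"
  define K where "K = Q0 / (pi * \<alpha>) - Q0 / pi * kappa_lower_bound n \<alpha> R Q0"
  obtain C where "C > 0" and C: "\<And>r. r \<le> R \<Longrightarrow> K \<le> C * exp (- sqrt (2 * \<kappa>) * r)"
    using const_le_exp_decay[of "sqrt (2 * \<kappa>)" R K] \<open>\<kappa> > 0\<close> by auto
  have "(u r)\<^sup>2 \<le> C * exp (- sqrt (2 * \<kappa>) * r)" if "hyp32 n \<alpha> R Q0 u \<kappa>" "r \<in> {0..R}" for u r
    using hyp32_u_sq_bounded[OF assms that] C[of r] that(2) unfolding K_def by auto
  with \<open>C > 0\<close> assms(3) show "\<exists>C>0. \<exists>R\<kappa>. 0 \<le> R\<kappa> \<and> R\<kappa> < R \<and>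
         (\<forall>u. hyp32 n \<alpha> R Q0 u \<kappa> \<longrightarrow> (\<forall>r\<in>{R\<kappa>..R}. (u r)\<^sup>2 \<le> C * exp (- sqrt (2 * \<kappa>) * r)))"
    by (intro exI[of _ C] conjI exI[of _ 0]) auto
qed

end
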